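(* Let $X$ be a finite set and let $C_i,C_j\in\mathcal C_X$ be distinct. Then $C_i$ and $C_j$ cover a common element $w$ of $S(X)$ if and only if $C_j$ can be obtained from $C_i$ by a nearest neighbor interchange over some internal edge $\alpha$ of $C_i$.
   Context: An $X$-tree is a pair $(T,\phi)$ with $T$ a finite tree and $\phi:X\to V(T)$ a map such that every vertex not in $\phi(X)$ has degree at least $3$; a vertex is labeled if it lies in $\phi(X)$. An $X$-forest is a set $\{(A,\mathcal T_A):A\in\pi\}$ where $\pi$ is a set partition of $X$ and each $\mathcal T_A$ is an $A$-tree. Contracting an edge $e=(u,v)$ removes $e$ and identifies $u,v$, the new vertex carrying the union of the labels of $u$ and $v$. Deleting $e$ removes $e$ without changing vertices; the deletion is safe if each of $u$ and $v$ is labeled or has degree greater than $3$. The Tuffley poset $S(X)$ is the set of $X$-forests ordered by $\mathcal F'\le\mathcal F$ iff $\mathcal F'$ is obtained from $\mathcal F$ by a sequence of contractions and safe deletions; $\mathcal F'\lessdot \mathcal F$ iff $\mathcal F'$ is obtained by a single contraction or safe deletion. $\mathcal C_X$ denotes the set of maximal elements of $S(X)$: trees whose leaves are labeled bijectively by $X$ and whose internal vertices are unlabeled of degree $3$. An internal edge is an edge both of whose endpoints are internal vertices. Nearest neighbor interchange (NNI): for $C\in\mathcal C_X$ and an internal edge $\alpha=(u,v)$, the edge $\alpha$ separates subtrees $A,B$ attached at $u$ from subtrees $C',D$ attached at $v$. Swapping $B$ with $C'$, or swapping $B$ with $D$, yields a new tree in $\mathcal C_X$; obtaining either of these from $C$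 is an NNI over $\alpha$. *)

theory Defs
  imports Main
begin

text \<open>A (labelled) graph on natural-number vertices: vertex set, set of edges
(each edge a 2-element set of vertices) and a labelling map \<phi> : X \<rightarrow> V
(only its values on X matter).  An X-forest \<open>{(A, T_A) : A \<in> \<pi>}\<close> is encoded
as the disjoint union of its trees; the partition \<pi> is then the partition
of X induced by the connected components.\<close>

type_synonym 'x lgraph = "nat set \<times> nat set set \<times> ('x \<Rightarrow> nat)"

definition verts :: "'x lgraph \<Rightarrow> nat set" where "verts G = fst G"
definition edges :: "'x lgraph \<Rightarrow> nat set set" where "edges G = fst (snd G)"
definition lab :: "'x lgraph \<Rightarrow> 'x \<Rightarrow> nat" where "lab G = snd (snd G)"

definition deg :: "'x lgraph \<Rightarrow> nat \<Rightarrow> nat" where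
  "deg G v = card {e \<in> edges G. v \<in> e}"

definition labeled :: "'x set \<Rightarrow> 'x lgraph \<Rightarrow> nat \<Rightarrow> bool" where
  "labeled X G v \<longleftrightarrow> v \<in> lab G ` X"

definition adj :: "'x lgraph \<Rightarrow> nat \<Rightarrow> nat \<Rightarrow> bool" where
  "adj G u v \<longleftrightarrow> {u, v} \<in> edges G"

definition wf_graph :: "'x set \<Rightarrow> 'x lgraph \<Rightarrow> bool" where
  "wf_graph X G \<longleftrightarrow> finite (verts G) \<and> lab G ` X \<subseteq> verts G \<and>
     (\<forall>e \<in> edges G. e \<subseteq> verts G \<and> card e = 2)"

definition has_cycle :: "'x lgraph \<Rightarrow> bool" where
  "has_cycle G \<longleftrightarrow> (\<exists>vs. length vs \<ge> 3 \<and> distinct vs \<and> set vs \<subseteq> verts G \<and>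
     (\<forall>i < length vs. {vs ! i, vs ! ((i + 1) mod length vs)} \<in> edges G))"

definition connected_in :: "'x lgraph \<Rightarrow> nat \<Rightarrow> nat \<Rightarrow> bool" where
  "connected_in G u v \<longleftrightarrow> (adj G)\<^sup>*\<^sup>* u v"

text \<open>X-forest: acyclic graph, every component contains a labelled vertex
(so each block of the induced partition is nonempty and each component is an
A-tree), every unlabelled vertex has degree at least 3.\<close>
definition is_X_forest :: "'x set \<Rightarrow> 'x lgraph \<Rightarrow> bool" where
  "is_X_forest X G \<longleftrightarrow> wf_graph X G \<and> \<not> has_cycle G \<and>
     (\<forall>v \<in> verts G. \<exists>x \<in> X. connected_in G v (lab G x)) \<and>
     (\<forall>v \<in> verts G. \<not> labeled X G v \<longrightarrow> deg G v \<ge> 3)"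

definition is_X_tree :: "'x set \<Rightarrow> 'x lgraph \<Rightarrow> bool" where
  "is_X_tree X G \<longleftrightarrow> is_X_forest X G \<and> verts G \<noteq> {} \<and>
     (\<forall>u \<in> verts G. \<forall>v \<in> verts G. connected_in G u v)"

text \<open>Isomorphism of X-labelled graphs (elements of S(X) are isomorphism classes).\<close>
definition iso :: "'x set \<Rightarrow> 'x lgraph \<Rightarrow> 'x lgraph \<Rightarrow> bool" where
  "iso X G H \<longleftrightarrow> (\<exists>f. bij_betw f (verts G) (verts H) \<and>
     (\<forall>u \<in> verts G. \<forall>v \<in> verts G. {u, v} \<in> edges G \<longleftrightarrow> {f u, f v} \<in> edges H) \<and>
     (\<forall>x \<in> X. f (lab G x) = lab H x))"

definition contract :: "'x lgraph \<Rightarrow> nat \<Rightarrow> nat \<Rightarrow> 'x lgraph" where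
  "contract G u v =
     (let r = (\<lambda>w. if w = v then u else w)
      in (verts G - {v}, (\<lambda>e. r ` e) ` (edges G - {{u, v}}), r \<circ> lab G))"

definition delete :: "'x lgraph \<Rightarrow> nat \<Rightarrow> nat \<Rightarrow> 'x lgraph" where
  "delete G u v = (verts G, edges G - {{u, v}}, lab G)"

definition safe_deletion :: "'x set \<Rightarrow> 'x lgraph \<Rightarrow> nat \<Rightarrow> nat \<Rightarrow> bool" where
  "safe_deletion X G u v \<longleftrightarrow>
     (labeled X G u \<or> deg G u > 3) \<and> (labeled X G v \<or> deg G v > 3)"

definition covered_by :: "'x set \<Rightarrow> 'x lgraph \<Rightarrow> 'x lgraph \<Rightarrow> bool" where
  "covered_by X F' F \<longleftrightarrow> (\<exists>u v. {u, v} \<in> edges F \<and>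
     (iso X F' (contract F u v) \<or> (safe_deletion X F u v \<and> iso X F' (delete F u v))))"

definition in_CX :: "'x set \<Rightarrow> 'x lgraph \<Rightarrow> bool" where
  "in_CX X C \<longleftrightarrow> is_X_tree X C \<and> inj_on (lab C) X \<and>
     (\<forall>v \<in> verts C. labeled X C v \<longleftrightarrow> deg C v \<le> 1) \<and>
     (\<forall>v \<in> verts C. \<not> labeled X C v \<longrightarrow> deg C v = 3)"

definition internal_vertex :: "'x set \<Rightarrow> 'x lgraph \<Rightarrow> nat \<Rightarrow> bool" where
  "internal_vertex X C v \<longleftrightarrow> v \<in> verts C \<and> \<not> labeled X C v"

text \<open>NNI over the internal edge {u,v}: a subtree hanging at u via neighbour b \<noteq> v
is swapped with a subtree hanging at v via neighbour c \<noteq> u.  Ranging over all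
choices of b and c gives exactly the two interchanges of the paper (up to
isomorphism), since b may be either of the two subtrees at u.\<close>
definition nni_result :: "'x lgraph \<Rightarrow> nat \<Rightarrow> nat \<Rightarrow> nat \<Rightarrow> nat \<Rightarrow> 'x lgraph" where
  "nni_result C u v b c =
     (verts C, (edges C - {{u, b}, {v, c}}) \<union> {{u, c}, {v, b}}, lab C)"

definition nni_over :: "'x set \<Rightarrow> 'x lgraph \<Rightarrow> nat \<Rightarrow> nat \<Rightarrow> 'x lgraph \<Rightarrow> bool" where
  "nni_over X C u v C' \<longleftrightarrow> {u, v} \<in> edges C \<and>
     internal_vertex X C u \<and> internal_vertex X C v \<and>
     (\<exists>b c. {u, b} \<in> edges C \<and> b \<noteq> v \<and> {v, c} \<in> edges C \<and> c \<noteq> u \<and>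
        iso X C' (nni_result C u v b c))"

end

theory Submission
  imports Defs
begin

text \<open>A lower cover of a tree in C_X is a contraction of one of its edges, or a safe deletion,
  which in a binary tree only exists when the tree is a single edge.  So two distinct trees with a
  common lower cover have isomorphic contractions of an edge {u, v} of C_i and an edge {p, q} of
  C_j.  In a contracted binary tree the merged vertex is the only vertex whose labels and degree
  are not those of a vertex of a binary tree; hence the isomorphism sends p to u and restricts to an
  isomorphism away from the two edges.  Each end of {p, q} and of {u, v} is a labelled leaf or
  carries two subtrees, and the subtrees at the two ends are distributed in the same way on both
  sides.  Either they sit at corresponding ends, which makes C_i and C_j isomorphic, or one subtree
  at u has been exchanged with one at v, which is an NNI.  Conversely, an NNI over {u, v} does not
  change the contraction of {u, v}.\<close>

definition simple_graph :: "'x lgraph \<Rightarrow> bool" where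
  "simple_graph G \<longleftrightarrow> finite (verts G) \<and> (\<forall>e \<in> edges G. e \<subseteq> verts G \<and> card e = 2)"

definition nbrs :: "'x lgraph \<Rightarrow> nat \<Rightarrow> nat set" where
  "nbrs G y = {z. {y, z} \<in> edges G}"

definition labs :: "'x set \<Rightarrow> 'x lgraph \<Rightarrow> nat \<Rightarrow> 'x set" where
  "labs X G y = {x \<in> X. lab G x = y}"

definition iso_map :: "'x set \<Rightarrow> (nat \<Rightarrow> nat) \<Rightarrow> 'x lgraph \<Rightarrow> 'x lgraph \<Rightarrow> bool" where
  "iso_map X f G H \<longleftrightarrow> bij_betw f (verts G) (verts H) \<and>
     (\<forall>u \<in> verts G. \<forall>v \<in> verts G. {u, v} \<in> edges G \<longleftrightarrow> {f u, f v} \<in> edges H) \<and>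
     (\<forall>x \<in> X. f (lab G x) = lab H x)"

lemma iso_iff_iso_map: "iso X G H \<longleftrightarrow> (\<exists>f. iso_map X f G H)"
  by (simp add: iso_def iso_map_def)

lemma mem_nbrs_iff [simp]: "z \<in> nbrs G y \<longleftrightarrow> {y, z} \<in> edges G"
  by (simp add: nbrs_def)

lemma mem_labs_iff [simp]: "x \<in> labs X G y \<longleftrightarrow> x \<in> X \<and> lab G x = y"
  by (simp add: labs_def)

lemma labeled_iff_labs: "labeled X G y \<longleftrightarrow> labs X G y \<noteq> {}"
  by (auto simp: labeled_def labs_def)

lemma wf_graph_imp_simple_graph: "wf_graph X G \<Longrightarrow> simple_graph G"
  by (auto simp: wf_graph_def simple_graph_def)

lemma simple_graph_edgeD:
  assumes "simple_graph G" "{a, b} \<in> edges G"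
  shows "a \<noteq> b" "a \<in> verts G" "b \<in> verts G"
proof -
  have "{a, b} \<subseteq> verts G" "card {a, b} = 2"
    using assms unfolding simple_graph_def by blast+
  then show "a \<noteq> b" "a \<in> verts G" "b \<in> verts G"
    by (auto simp: card_insert_if split: if_splits)
qed

lemma simple_graph_edgeE:
  assumes "simple_graph G" "e \<in> edges G"
  obtains a b where "e = {a, b}" "a \<noteq> b"
  using assms unfolding simple_graph_def by (metis card_2_iff)

lemma nbrs_subset: "simple_graph G \<Longrightarrow> nbrs G y \<subseteq> verts G - {y}"
proof
  fix z assume "simple_graph G" "z \<in> nbrs G y"
  then show "z \<in> verts G - {y}" using simple_graph_edgeD[of G y z] by auto
qed

lemma finite_nbrs: "simple_graph G \<Longrightarrow> finite (nbrs G y)"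
  using nbrs_subset simple_graph_def by (metis finite_Diff finite_subset)

lemma deg_eq_card_nbrs:
  assumes "simple_graph G"
  shows "deg G y = card (nbrs G y)"
proof -
  have "{e \<in> edges G. y \<in> e} = (\<lambda>z. {y, z}) ` nbrs G y"
  proof (intro equalityI subsetI)
    fix e assume "e \<in> {e \<in> edges G. y \<in> e}"
    then obtain a b where "e = {a, b}" "e \<in> edges G" "y \<in> e"
      by (metis (no_types, lifting) mem_Collect_eq simple_graph_edgeE[OF assms])
    then show "e \<in> (\<lambda>z. {y, z}) ` nbrs G y"
      by (auto simp: insert_commute)
  qed auto
  moreover have "inj_on (\<lambda>z. {y, z}) (nbrs G y)"
    using nbrs_subset[OF assms, of y] by (auto simp: inj_on_def doubleton_eq_iff)
  ultimately show ?thesis unfolding deg_def by (simp add: card_image)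
qed

definition cycle :: "'x lgraph \<Rightarrow> nat list \<Rightarrow> bool" where
  "cycle G vs \<longleftrightarrow> length vs \<ge> 3 \<and> distinct vs \<and> set vs \<subseteq> verts G \<and>
     successively (\<lambda>a b. {a, b} \<in> edges G) (vs @ [hd vs])"

lemma has_cycle_iff_cycle: "has_cycle G \<longleftrightarrow> (\<exists>vs. cycle G vs)"
proof -
  have "(\<forall>i < length vs. {vs ! i, vs ! ((i + 1) mod length vs)} \<in> edges G)
      \<longleftrightarrow> successively (\<lambda>a b. {a, b} \<in> edges G) (vs @ [hd vs])" if "length vs \<ge> 3" for vs
  proof -
    have "(vs @ [hd vs]) ! i = vs ! (i mod length vs)" if "i \<le> length vs" for i
    proof -
      have "vs \<noteq> []" using \<open>length vs \<ge> 3\<close> by auto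
      then show ?thesis using that hd_conv_nth[of vs] by (cases "i = length vs") (auto simp: nth_append)
    qed
    then show ?thesis using \<open>length vs \<ge> 3\<close>
      unfolding successively_conv_nth by (auto simp del: mod_Suc)
  qed
  then show ?thesis unfolding has_cycle_def cycle_def by blast
qed

lemma cycle_rotate1: "cycle G vs \<Longrightarrow> cycle G (rotate1 vs)"
  by (cases vs) (auto simp: cycle_def successively_append_iff successively_Cons)

lemma cycle_through:
  assumes "cycle G vs" "u \<in> set vs"
  obtains ys where "cycle G (u # ys)"
proof -
  obtain k where k: "k < length vs" "vs ! k = u"
    using assms(2) by (metis in_set_conv_nth)
  have "cycle G (rotate k vs)"
    using assms(1) by (induction k) (auto simp: cycle_rotate1)
  moreover have "vs \<noteq> []" using k by auto
  then have "rotate k vs \<noteq> []" "hd (rotate k vs) = u"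
    using k hd_rotate_conv_nth[of vs k] by auto
  ultimately show thesis using that by (metis list.collapse)
qed

lemma acyclic_no_triangle:
  assumes "\<not> has_cycle G" "simple_graph G"
    "{a, b} \<in> edges G" "{b, c} \<in> edges G" "{a, c} \<in> edges G"
  shows False
proof -
  have "cycle G [a, b, c]"
    using assms(3-5) simple_graph_edgeD[OF assms(2)]
    unfolding cycle_def by (auto simp: insert_commute)
  then show False using assms(1) has_cycle_iff_cycle by blast
qed

definition contract_map :: "nat \<Rightarrow> nat \<Rightarrow> nat \<Rightarrow> nat" where
  "contract_map u v w = (if w = v then u else w)"

lemma contract_map_eq_merged [simp]: "contract_map u v w = u \<longleftrightarrow> w = u \<or> w = v"
  by (auto simp: contract_map_def)

lemma contract_map_eq_other [simp]: "p \<notin> {u, v} \<Longrightarrow> contract_map u v w = p \<longleftrightarrow> w = p"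
  by (auto simp: contract_map_def)

lemma contract_map_endpoints [simp]: "contract_map u v u = u" "contract_map u v v = u"
  by (simp_all add: contract_map_def)

lemma contract_map_id [simp]: "w \<noteq> v \<Longrightarrow> contract_map u v w = w"
  by (simp add: contract_map_def)

lemma verts_contract [simp]: "verts (contract G u v) = verts G - {v}"
  by (simp add: contract_def verts_def Let_def)

lemma edges_contract: "edges (contract G u v) = (\<lambda>e. contract_map u v ` e) ` (edges G - {{u, v}})"
  by (simp add: contract_def edges_def Let_def contract_map_def)

lemma lab_contract: "lab (contract G u v) x = contract_map u v (lab G x)"
  by (simp add: contract_def lab_def Let_def contract_map_def)

lemma edge_contractI:
  "{a, b} \<in> edges G \<Longrightarrow> {a, b} \<noteq> {u, v} \<Longrightarrow>
    {contract_map u v a, contract_map u v b} \<in> edges (contract G u v)"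
  unfolding edges_contract by (rule image_eqI[of _ _ "{a, b}"]) auto

lemma edge_contract_iff:
  assumes "simple_graph G"
  shows "{p, q} \<in> edges (contract G u v) \<longleftrightarrow>
    (\<exists>a b. {a, b} \<in> edges G \<and> {a, b} \<noteq> {u, v} \<and> p = contract_map u v a \<and> q = contract_map u v b)"
proof
  assume "{p, q} \<in> edges (contract G u v)"
  then obtain e where e: "e \<in> edges G" "e \<noteq> {u, v}" "{p, q} = contract_map u v ` e"
    by (auto simp: edges_contract)
  then obtain a b where ab: "e = {a, b}" using simple_graph_edgeE[OF assms] by metis
  then have "{p, q} = {contract_map u v a, contract_map u v b}" using e by simp
  then consider "p = contract_map u v a" "q = contract_map u v b"
    | "p = contract_map u v b" "q = contract_map u v a"
    by (auto simp: doubleton_eq_iff)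
  then show "\<exists>a b. {a, b} \<in> edges G \<and> {a, b} \<noteq> {u, v} \<and> p = contract_map u v a \<and> q = contract_map u v b"
  proof cases
    case 1
    then show ?thesis using e ab by blast
  next
    case 2
    moreover have "{b, a} \<in> edges G" "{b, a} \<noteq> {u, v}" using e ab by (simp_all add: insert_commute)
    ultimately show ?thesis by blast
  qed
qed (auto intro: edge_contractI)

lemma simple_graph_contract:
  assumes G: "simple_graph G" and uv: "{u, v} \<in> edges G"
  shows "simple_graph (contract G u v)"
proof -
  have "u \<noteq> v" "u \<in> verts G" using simple_graph_edgeD[OF G uv] by auto
  have "e \<subseteq> verts G - {v} \<and> card e = 2" if e: "e \<in> edges (contract G u v)" for e
  proof -
    obtain e0 where e0: "e0 \<in> edges G" "e0 \<noteq> {u, v}" "e = contract_map u v ` e0"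
      using e unfolding edges_contract by blast
    then obtain a b where "e0 = {a, b}" using simple_graph_edgeE[OF G] by metis
    with e0 have ab: "{a, b} \<in> edges G" "{a, b} \<noteq> {u, v}"
        "e = {contract_map u v a, contract_map u v b}" by auto
    have "a \<noteq> b" "a \<in> verts G" "b \<in> verts G" using simple_graph_edgeD[OF G ab(1)] by auto
    with ab(2) \<open>u \<noteq> v\<close> \<open>u \<in> verts G\<close> show ?thesis
      unfolding ab(3) contract_map_def by (auto simp: doubleton_eq_iff)
  qed
  then show ?thesis using G unfolding simple_graph_def by auto
qed

lemma wf_graph_contract:
  assumes "wf_graph X G" "{u, v} \<in> edges G"
  shows "wf_graph X (contract G u v)"
proof -
  have "u \<in> verts G" "u \<noteq> v"
    using simple_graph_edgeD[OF wf_graph_imp_simple_graph[OF assms(1)] assms(2)] by auto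
  then have "lab (contract G u v) ` X \<subseteq> verts (contract G u v)"
    using assms(1) unfolding wf_graph_def by (auto simp: lab_contract contract_map_def)
  then show ?thesis
    using simple_graph_contract[OF wf_graph_imp_simple_graph[OF assms(1)] assms(2)]
    unfolding wf_graph_def simple_graph_def by auto
qed

lemma labs_contract_merged: "labs X (contract G u v) u = labs X G u \<union> labs X G v"
  by (auto simp: labs_def lab_contract)

lemma labs_contract_other: "y \<notin> {u, v} \<Longrightarrow> labs X (contract G u v) y = labs X G y"
  by (auto simp: labs_def lab_contract)

lemma contract_connected:
  "(adj G)\<^sup>*\<^sup>* a b \<Longrightarrow> (adj (contract G u v))\<^sup>*\<^sup>* (contract_map u v a) (contract_map u v b)"
proof (induction rule: rtranclp_induct)
  case (step b c)
  show ?case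
  proof (cases "{b, c} = {u, v}")
    case True
    then have "contract_map u v b = contract_map u v c"
      by (auto simp: doubleton_eq_iff contract_map_def)
    then show ?thesis using step.IH by simp
  next
    case False
    then have "adj (contract G u v) (contract_map u v b) (contract_map u v c)"
      using edge_contractI step.hyps(2)[unfolded adj_def] by (simp add: adj_def)
    with step.IH show ?thesis by (rule rtranclp.rtrancl_into_rtrancl)
  qed
qed simp

context
  fixes G :: "'x lgraph" and u v :: nat
  assumes G: "simple_graph G" and uv: "{u, v} \<in> edges G"
begin

lemma contract_edge_off:
  assumes "p \<notin> {u, v}" "q \<notin> {u, v}"
  shows "{p, q} \<in> edges (contract G u v) \<longleftrightarrow> {p, q} \<in> edges G"
proof
  assume "{p, q} \<in> edges (contract G u v)"
  then obtain a b where "{a, b} \<in> edges G" "p = contract_map u v a" "q = contract_map u v b"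
    unfolding edge_contract_iff[OF G] by blast
  with assms show "{p, q} \<in> edges G" by simp
next
  assume "{p, q} \<in> edges G"
  moreover have "{p, q} \<noteq> {u, v}" using assms by auto
  ultimately show "{p, q} \<in> edges (contract G u v)"
    using edge_contractI[of p q G u v] assms by simp
qed

lemma contract_edge_merged:
  assumes "z \<notin> {u, v}"
  shows "{u, z} \<in> edges (contract G u v) \<longleftrightarrow> {u, z} \<in> edges G \<or> {v, z} \<in> edges G"
proof
  assume "{u, z} \<in> edges (contract G u v)"
  then obtain a b where "{a, b} \<in> edges G" "u = contract_map u v a" "z = contract_map u v b"
    unfolding edge_contract_iff[OF G] by blast
  with assms show "{u, z} \<in> edges G \<or> {v, z} \<in> edges G"
    by (metis contract_map_eq_merged contract_map_eq_other)
next
  have "u \<noteq> v" using simple_graph_edgeD[OF G uv] by simp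
  then have "{u, z} \<noteq> {u, v}" "{v, z} \<noteq> {u, v}" using assms by (auto simp: doubleton_eq_iff)
  moreover assume "{u, z} \<in> edges G \<or> {v, z} \<in> edges G"
  ultimately show "{u, z} \<in> edges (contract G u v)"
    using assms edge_contractI[of u z G u v] edge_contractI[of v z G u v] by auto
qed

lemma nbrs_contract_merged: "nbrs (contract G u v) u = (nbrs G u - {v}) \<union> (nbrs G v - {u})"
proof (intro equalityI subsetI)
  fix z assume z: "z \<in> nbrs (contract G u v) u"
  then have "z \<notin> {u, v}" using subsetD[OF nbrs_subset[OF simple_graph_contract[OF G uv]] z] by simp
  with z show "z \<in> (nbrs G u - {v}) \<union> (nbrs G v - {u})" by (simp add: contract_edge_merged)
next
  fix z assume z: "z \<in> (nbrs G u - {v}) \<union> (nbrs G v - {u})"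
  then have "z \<notin> {u, v}" using nbrs_subset[OF G, of u] nbrs_subset[OF G, of v] by blast
  with z show "z \<in> nbrs (contract G u v) u" using contract_edge_merged by auto
qed

lemma nbrs_contract_other:
  assumes "y \<notin> {u, v}"
  shows "nbrs (contract G u v) y = contract_map u v ` nbrs G y"
proof (intro equalityI subsetI)
  fix z assume "z \<in> nbrs (contract G u v) y"
  then obtain a b where "{a, b} \<in> edges G" "y = contract_map u v a" "z = contract_map u v b"
    using edge_contract_iff[OF G] by auto
  with assms show "z \<in> contract_map u v ` nbrs G y" by auto
next
  fix z assume "z \<in> contract_map u v ` nbrs G y"
  then obtain b where "{y, b} \<in> edges G" "z = contract_map u v b" by auto
  moreover have "{y, b} \<noteq> {u, v}" using assms by auto
  ultimately show "z \<in> nbrs (contract G u v) y"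
    using edge_contractI[of y b G u v] assms by simp
qed

end

lemma path_between_edge_ends_cycle:
  assumes uv: "{u, v} \<in> edges G" "u \<in> verts G" "v \<in> verts G"
    and ys: "length ys \<ge> 2" "distinct ys" "set ys \<subseteq> verts G" "u \<notin> set ys" "v \<notin> set ys"
    and path: "successively (\<lambda>a b. {a, b} \<in> edges G) ys"
    and a: "a \<in> {u, v}" "{a, hd ys} \<in> edges G" and b: "b \<in> {u, v}" "{last ys, b} \<in> edges G"
  shows "has_cycle G"
proof -
  let ?EG = "\<lambda>a b. {a, b} \<in> edges G"
  have ne: "ys \<noteq> []" using ys(1) by auto
  have "cycle G (a # ys @ (if a = b then [] else [b]))"
  proof (cases "a = b")
    case True
    then have "successively ?EG (a # ys @ [a])"
      using a b path ne by (auto simp: successively_Cons successively_append_iff)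
    then show ?thesis using True a ys uv(2,3) by (auto simp: cycle_def)
  next
    case False
    then have "?EG b a" using a b uv(1) by (auto simp: insert_commute)
    then have "successively ?EG (a # ys @ [b, a])"
      using a b path ne by (auto simp: successively_Cons successively_append_iff)
    then show ?thesis using False a b ys uv(2,3) by (auto simp: cycle_def)
  qed
  then show ?thesis using has_cycle_iff_cycle by blast
qed

lemma contract_acyclic:
  assumes G: "simple_graph G" and uv: "{u, v} \<in> edges G" and acyc: "\<not> has_cycle G"
  shows "\<not> has_cycle (contract G u v)"
proof
  let ?EG = "\<lambda>a b. {a, b} \<in> edges G"
  let ?EW = "\<lambda>a b. {a, b} \<in> edges (contract G u v)"
  assume "has_cycle (contract G u v)"
  then obtain vs where vs: "cycle (contract G u v) vs" using has_cycle_iff_cycle by blast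
  have "u \<in> verts G" "v \<in> verts G" using simple_graph_edgeD[OF G uv] by auto
  have lift: "successively ?EW zs \<longleftrightarrow> successively ?EG zs" if "set zs \<inter> {u, v} = {}" for zs
  proof (rule successively_cong)
    fix a b assume "a \<in> set zs" "b \<in> set zs"
    with that have "a \<notin> {u, v}" "b \<notin> {u, v}" by auto
    then show "?EW a b \<longleftrightarrow> ?EG a b" by (rule contract_edge_off[OF G uv])
  qed simp
  show False
  proof (cases "u \<in> set vs")
    case False
    moreover have "v \<notin> set vs" "set (vs @ [hd vs]) = set vs"
      using vs by (cases vs; auto simp: cycle_def)+
    ultimately have "cycle G vs" using vs lift[of "vs @ [hd vs]"] by (auto simp: cycle_def)
    then show False using acyc has_cycle_iff_cycle by blast
  next
    case True
    then obtain ys where "cycle (contract G u v) (u # ys)" using vs cycle_through by blast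
    then have ys: "length ys \<ge> 2" "distinct ys" "set ys \<subseteq> verts G" "u \<notin> set ys" "v \<notin> set ys"
      and "successively ?EW (u # ys @ [u])"
      by (auto simp: cycle_def)
    moreover have "ys \<noteq> []" using ys(1) by auto
    ultimately have "?EW u (hd ys)" "successively ?EW ys" "?EW u (last ys)"
      and "hd ys \<in> set ys" "last ys \<in> set ys"
      by (auto simp: successively_Cons successively_append_iff insert_commute)
    moreover from this ys have "hd ys \<notin> {u, v}" "last ys \<notin> {u, v}" by blast+
    ultimately have "?EG u (hd ys) \<or> ?EG v (hd ys)" "?EG u (last ys) \<or> ?EG v (last ys)"
      and path: "successively ?EG ys"
      using contract_edge_merged[OF G uv] lift[of ys] ys by auto
    then obtain a b where "a \<in> {u, v}" "?EG a (hd ys)" "b \<in> {u, v}" "?EG (last ys) b"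
      by (auto simp: insert_commute)
    with path_between_edge_ends_cycle[OF uv \<open>u \<in> verts G\<close> \<open>v \<in> verts G\<close> ys path] acyc
    show False by blast
  qed
qed

lemma iso_map_inv:
  assumes f: "iso_map X f G H" and G: "wf_graph X G"
  shows "iso_map X (inv_into (verts G) f) H G"
proof -
  let ?g = "inv_into (verts G) f"
  have bij: "bij_betw f (verts G) (verts H)" using f by (simp add: iso_map_def)
  then have g: "bij_betw ?g (verts H) (verts G)" by (rule bij_betw_inv_into)
  have "{y, z} \<in> edges H \<longleftrightarrow> {?g y, ?g z} \<in> edges G" if "y \<in> verts H" "z \<in> verts H" for y z
  proof -
    have "?g y \<in> verts G" "?g z \<in> verts G" using g that by (meson bij_betwE)+
    then have "{?g y, ?g z} \<in> edges G \<longleftrightarrow> {f (?g y), f (?g z)} \<in> edges H"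
      using f unfolding iso_map_def by blast
    then show ?thesis using bij_betw_inv_into_right[OF bij] that by simp
  qed
  moreover have "?g (lab H x) = lab G x" if "x \<in> X" for x
  proof -
    have "lab G x \<in> verts G" "f (lab G x) = lab H x"
      using f G that unfolding iso_map_def wf_graph_def by auto
    then show ?thesis using bij_betw_inv_into_left[OF bij] by metis
  qed
  ultimately show ?thesis using g unfolding iso_map_def by blast
qed

lemma iso_refl: "iso X G G"
  unfolding iso_iff_iso_map iso_map_def by (rule exI[of _ id]) auto

lemma iso_sym: "iso X G H \<Longrightarrow> wf_graph X G \<Longrightarrow> iso X H G"
  unfolding iso_iff_iso_map using iso_map_inv by blast

lemma iso_trans:
  assumes "iso X G H" "iso X H K"
  shows "iso X G K"
proof -
  obtain f g where f: "iso_map X f G H" and g: "iso_map X g H K"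
    using assms unfolding iso_iff_iso_map by blast
  then have "iso_map X (g \<circ> f) G K"
    unfolding iso_map_def by (auto intro: bij_betw_trans dest: bij_betwE)
  then show ?thesis unfolding iso_iff_iso_map by blast
qed

lemma iso_map_nbrs:
  assumes f: "iso_map X f G H" and G: "simple_graph G" and H: "simple_graph H"
    and y: "y \<in> verts G"
  shows "nbrs H (f y) = f ` nbrs G y"
proof (intro equalityI subsetI)
  fix z assume z: "z \<in> nbrs H (f y)"
  then have "z \<in> verts H" using nbrs_subset[OF H] by blast
  then obtain z' where "z' \<in> verts G" "z = f z'"
    using f unfolding iso_map_def by (metis bij_betw_imp_surj_on imageE)
  then show "z \<in> f ` nbrs G y" using f y z unfolding iso_map_def by auto
next
  fix z assume "z \<in> f ` nbrs G y"
  then show "z \<in> nbrs H (f y)"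
    using f y nbrs_subset[OF G, of y] unfolding iso_map_def by auto
qed

lemma iso_map_card_nbrs:
  assumes "iso_map X f G H" "simple_graph G" "simple_graph H" "y \<in> verts G"
  shows "card (nbrs H (f y)) = card (nbrs G y)"
proof -
  have "inj_on f (nbrs G y)"
    using assms(1) nbrs_subset[OF assms(2), of y] unfolding iso_map_def bij_betw_def
    by (meson Diff_subset inj_on_subset subset_trans)
  then show ?thesis using iso_map_nbrs[OF assms] by (simp add: card_image)
qed

lemma iso_map_labs:
  assumes f: "iso_map X f G H" and G: "wf_graph X G" and y: "y \<in> verts G"
  shows "labs X H (f y) = labs X G y"
proof -
  have "lab H x = f y \<longleftrightarrow> lab G x = y" if "x \<in> X" for x
  proof -
    have "lab G x \<in> verts G" "f (lab G x) = lab H x"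
      using f G that unfolding iso_map_def wf_graph_def by auto
    then show ?thesis using f y unfolding iso_map_def bij_betw_def inj_on_def by metis
  qed
  then show ?thesis by (auto simp: labs_def)
qed

lemma iso_map_contract:
  assumes f: "iso_map X f G H" and G: "wf_graph X G" and H: "wf_graph X H"
    and ab: "{a, b} \<in> edges G"
  shows "iso X (contract G a b) (contract H (f a) (f b))"
proof -
  have sG: "simple_graph G" and sH: "simple_graph H"
    using G H by (simp_all add: wf_graph_imp_simple_graph)
  have bij: "bij_betw f (verts G) (verts H)"
    and E: "\<And>y z. y \<in> verts G \<Longrightarrow> z \<in> verts G \<Longrightarrow> {y, z} \<in> edges G \<longleftrightarrow> {f y, f z} \<in> edges H"
    using f unfolding iso_map_def by blast+
  have "a \<in> verts G" "b \<in> verts G" "a \<noteq> b" using simple_graph_edgeD[OF sG ab] by auto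
  have inj: "inj_on f (verts G)" using bij by (simp add: bij_betw_def)
  have map: "f (contract_map a b y) = contract_map (f a) (f b) (f y)" if "y \<in> verts G" for y
    using that \<open>b \<in> verts G\<close> inj by (auto simp: contract_map_def inj_on_def)
  have bij': "bij_betw f (verts G - {b}) (verts H - {f b})"
    using bij_betw_DiffI[OF bij, of "{b}" "{f b}"] \<open>b \<in> verts G\<close> bij by (auto dest: bij_betwE)
  have same_edge: "{f y, f z} = {f a, f b} \<longleftrightarrow> {y, z} = {a, b}"
    if "y \<in> verts G" "z \<in> verts G" for y z
    using that \<open>a \<in> verts G\<close> \<open>b \<in> verts G\<close> inj unfolding doubleton_eq_iff inj_on_def by metis
  have "{y, z} \<in> edges (contract G a b) \<longleftrightarrow> {f y, f z} \<in> edges (contract H (f a) (f b))"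
    if yz: "y \<in> verts G - {b}" "z \<in> verts G - {b}" for y z
  proof
    assume "{y, z} \<in> edges (contract G a b)"
    then obtain y' z' where e: "{y', z'} \<in> edges G" "{y', z'} \<noteq> {a, b}"
        "y = contract_map a b y'" "z = contract_map a b z'"
      unfolding edge_contract_iff[OF sG] by blast
    have "y' \<in> verts G" "z' \<in> verts G" using simple_graph_edgeD[OF sG e(1)] by auto
    then have "{f y', f z'} \<in> edges H" "{f y', f z'} \<noteq> {f a, f b}"
      and "f y = contract_map (f a) (f b) (f y')" "f z = contract_map (f a) (f b) (f z')"
      using e E same_edge map by auto
    then show "{f y, f z} \<in> edges (contract H (f a) (f b))"
      unfolding edge_contract_iff[OF sH] by blast
  next
    assume "{f y, f z} \<in> edges (contract H (f a) (f b))"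
    then obtain y' z' where e: "{y', z'} \<in> edges H" "{y', z'} \<noteq> {f a, f b}"
        "f y = contract_map (f a) (f b) y'" "f z = contract_map (f a) (f b) z'"
      unfolding edge_contract_iff[OF sH] by blast
    have "y' \<in> verts H" "z' \<in> verts H" using simple_graph_edgeD[OF sH e(1)] by auto
    then obtain y'' z'' where v: "y'' \<in> verts G" "z'' \<in> verts G" "y' = f y''" "z' = f z''"
      using bij by (metis bij_betw_imp_surj_on imageE)
    have "contract_map a b y'' \<in> verts G" "contract_map a b z'' \<in> verts G"
      using v \<open>a \<in> verts G\<close> by (auto simp: contract_map_def)
    then have "y = contract_map a b y''" "z = contract_map a b z''"
      using e(3,4) v map yz inj by (metis DiffD1 inj_onD)+
    moreover have "{y'', z''} \<in> edges G" "{y'', z''} \<noteq> {a, b}"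
      using e(1,2) v E same_edge by auto
    ultimately show "{y, z} \<in> edges (contract G a b)"
      unfolding edge_contract_iff[OF sG] by blast
  qed
  moreover have "f (lab (contract G a b) x) = lab (contract H (f a) (f b)) x" if "x \<in> X" for x
    using that f G map unfolding iso_map_def wf_graph_def by (auto simp: lab_contract)
  ultimately have "iso_map X f (contract G a b) (contract H (f a) (f b))"
    using bij' unfolding iso_map_def by simp
  then show ?thesis unfolding iso_iff_iso_map by blast
qed

lemma bij_betw_extend_pair:
  assumes g: "bij_betw g (A - {p, q}) (B - {s, t})"
    and "p \<noteq> q" "p \<in> A" "q \<in> A" "s \<noteq> t" "s \<in> B" "t \<in> B"
  shows "bij_betw (\<lambda>y. if y = p then s else if y = q then t else g y) A B"
proof -
  let ?k = "\<lambda>y. if y = p then s else if y = q then t else g y"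
  have "bij_betw ?k (A - {p, q}) (B - {s, t})"
    using g by (rule bij_betw_cong[THEN iffD1, rotated]) auto
  moreover have "bij_betw ?k {p, q} {s, t}"
    using assms(2,5) by (auto simp: bij_betw_def)
  ultimately have "bij_betw ?k ((A - {p, q}) \<union> {p, q}) ((B - {s, t}) \<union> {s, t})"
    by (rule bij_betw_combine) blast
  moreover have "(A - {p, q}) \<union> {p, q} = A" "(B - {s, t}) \<union> {s, t} = B"
    using assms(3,4,6,7) by auto
  ultimately show ?thesis by simp
qed

lemma iso_extend_across_edge:
  assumes H: "simple_graph H" and T: "simple_graph T"
    and pq: "{p, q} \<in> edges H" and st: "{s, t} \<in> edges T"
    and g: "bij_betw g (verts H - {p, q}) (verts T - {s, t})"
    and off: "\<And>y z. y \<in> verts H - {p, q} \<Longrightarrow> z \<in> verts H - {p, q} \<Longrightarrow>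
        {y, z} \<in> edges H \<longleftrightarrow> {g y, g z} \<in> edges T"
    and np: "g ` (nbrs H p - {q}) = nbrs T s - {t}"
    and nq: "g ` (nbrs H q - {p}) = nbrs T t - {s}"
    and lp: "labs X H p = labs X T s" and lq: "labs X H q = labs X T t"
    and lo: "\<And>x. x \<in> X \<Longrightarrow> lab H x \<notin> {p, q} \<Longrightarrow> lab T x = g (lab H x)"
  shows "iso X H T"
proof -
  define k where "k y = (if y = p then s else if y = q then t else g y)" for y
  have "p \<noteq> q" "p \<in> verts H" "q \<in> verts H" using simple_graph_edgeD[OF H pq] by auto
  have "s \<noteq> t" "s \<in> verts T" "t \<in> verts T" using simple_graph_edgeD[OF T st] by auto
  have k_pq: "k p = s" "k q = t" using \<open>p \<noteq> q\<close> by (simp_all add: k_def)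
  have bij: "bij_betw k (verts H) (verts T)"
    unfolding k_def by (rule bij_betw_extend_pair) fact+
  have end_edge: "{a, z} \<in> edges H \<longleftrightarrow> {k a, k z} \<in> edges T"
    if a: "a \<in> {p, q}" and z: "z \<in> verts H - {p, q}" for a z
  proof -
    let ?o = "if a = p then q else p"
    have inj: "inj_on g (verts H - {p, q})" using g by (simp add: bij_betw_def)
    have "g z \<in> verts T - {s, t}" using g z by (meson bij_betwE)
    moreover have "nbrs H a - {?o} \<subseteq> verts H - {p, q}"
      using a nbrs_subset[OF H, of a] by auto
    ultimately have "{a, z} \<in> edges H \<longleftrightarrow> g z \<in> g ` (nbrs H a - {?o})"
      using z inj_on_image_mem_iff[OF inj z] by auto
    also have "\<dots> \<longleftrightarrow> {k a, k z} \<in> edges T"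
      using a z np nq \<open>p \<noteq> q\<close> \<open>g z \<in> verts T - {s, t}\<close> k_pq by (auto simp: k_def)
    finally show ?thesis .
  qed
  have "{y, z} \<in> edges H \<longleftrightarrow> {k y, k z} \<in> edges T" if "y \<in> verts H" "z \<in> verts H" for y z
  proof -
    consider "y \<in> {p, q}" "z \<in> {p, q}" | "y \<in> {p, q}" "z \<notin> {p, q}" | "y \<notin> {p, q}" "z \<in> {p, q}"
      | "y \<notin> {p, q}" "z \<notin> {p, q}" by blast
    then show ?thesis
    proof cases
      case 1
      then show ?thesis
        using pq st k_pq simple_graph_edgeD[OF H, of y y] simple_graph_edgeD[OF T, of "k y" "k y"]
        by (auto simp: insert_commute)
    next
      case 2
      then show ?thesis using end_edge that by blast
    next
      case 3
      then show ?thesis using end_edge[of z y] that by (simp add: insert_commute)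
    next
      case 4
      then show ?thesis using off that by (simp add: k_def)
    qed
  qed
  moreover have "k (lab H x) = lab T x" if "x \<in> X" for x
    using that lp lq lo[OF that] unfolding labs_def k_def by (auto simp: set_eq_iff)
  ultimately have "iso_map X k H T" using bij unfolding iso_map_def by blast
  then show ?thesis unfolding iso_iff_iso_map by blast
qed

lemma iso_edgeless:
  assumes "iso X G H" "edges H = {}" "simple_graph G"
  shows "edges G = {}"
proof (rule ccontr)
  obtain f where f: "iso_map X f G H" using assms(1) unfolding iso_iff_iso_map by blast
  assume "edges G \<noteq> {}"
  then obtain a b where e: "{a, b} \<in> edges G"
    using simple_graph_edgeE[OF assms(3)] by (metis ex_in_conv)
  then have "a \<in> verts G" "b \<in> verts G" using simple_graph_edgeD[OF assms(3)] by auto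
  with e f assms(2) show False unfolding iso_map_def by auto
qed

lemma iso_card_verts: "iso X G H \<Longrightarrow> card (verts G) = card (verts H)"
  unfolding iso_iff_iso_map iso_map_def by (metis bij_betw_same_card)

lemma nbrs_edge_ends_disjoint:
  assumes G: "simple_graph G" and acyc: "\<not> has_cycle G" and uv: "{u, v} \<in> edges G"
  shows "(nbrs G u - {v}) \<inter> (nbrs G v - {u}) = {}"
proof (rule ccontr)
  assume "(nbrs G u - {v}) \<inter> (nbrs G v - {u}) \<noteq> {}"
  then obtain c where "{u, c} \<in> edges G" "{v, c} \<in> edges G"
    by (auto simp del: mem_nbrs_iff simp: nbrs_def)
  then show False using acyclic_no_triangle[OF acyc G uv, of c] by (simp add: insert_commute)
qed

lemma in_CX_wf_graph: "in_CX X C \<Longrightarrow> wf_graph X C"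
  by (simp add: in_CX_def is_X_tree_def is_X_forest_def)

lemma in_CX_simple_graph: "in_CX X C \<Longrightarrow> simple_graph C"
  using in_CX_wf_graph wf_graph_imp_simple_graph by blast

lemma in_CX_acyclic: "in_CX X C \<Longrightarrow> \<not> has_cycle C"
  by (simp add: in_CX_def is_X_tree_def is_X_forest_def)

lemma in_CX_labs: "in_CX X C \<Longrightarrow> labs X C y = {} \<or> (\<exists>x. labs X C y = {x})"
  unfolding in_CX_def labs_def inj_on_def by blast

lemma in_CX_card_nbrs:
  assumes "in_CX X C" "y \<in> verts C"
  shows "labs X C y \<noteq> {} \<Longrightarrow> card (nbrs C y) \<le> 1"
    and "labs X C y = {} \<Longrightarrow> card (nbrs C y) = 3"
  using assms deg_eq_card_nbrs[OF in_CX_simple_graph[OF assms(1)]] labeled_iff_labs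
  unfolding in_CX_def by metis+

text \<open>The two possible shapes of the end y of an edge {y, z} of a tree in C_X, given by the labels
  at y and the neighbours of y other than z.\<close>
definition leaf_or_fork :: "'a set \<Rightarrow> 'b set \<Rightarrow> bool" where
  "leaf_or_fork L N \<longleftrightarrow> (\<exists>x. L = {x}) \<and> N = {} \<or> L = {} \<and> card N = 2"

lemma leaf_or_fork_card: "leaf_or_fork L N \<Longrightarrow> finite L \<and> finite N \<and> 2 * card L + card N = 2"
  unfolding leaf_or_fork_def by (auto intro: card_ge_0_finite)

lemma leaf_or_fork_image:
  "leaf_or_fork L N \<Longrightarrow> inj_on g N \<Longrightarrow> leaf_or_fork L (g ` N)"
  unfolding leaf_or_fork_def by (auto simp: card_image)

lemma in_CX_edge_end:
  assumes C: "in_CX X C" and e: "{y, z} \<in> edges C"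
  shows "leaf_or_fork (labs X C y) (nbrs C y - {z})"
proof -
  have y: "y \<in> verts C" and z: "z \<in> nbrs C y"
    using simple_graph_edgeD[OF in_CX_simple_graph[OF C] e] e by auto
  have fin: "finite (nbrs C y)" using finite_nbrs[OF in_CX_simple_graph[OF C]] .
  show ?thesis
  proof (cases "labs X C y = {}")
    case True
    then show ?thesis
      using in_CX_card_nbrs(2)[OF C y] z fin by (simp add: leaf_or_fork_def)
  next
    case False
    then have "nbrs C y = {z}"
      using in_CX_card_nbrs(1)[OF C y] z fin card_le_Suc0_iff_eq[OF fin] by auto
    then show ?thesis using False in_CX_labs[OF C, of y] by (auto simp: leaf_or_fork_def)
  qed
qed

text \<open>The local shape of a vertex of a tree in C_X.  Contracting an edge preserves it everywhere
  except at the merged vertex, which is how isomorphisms of contractions are pinned down.\<close>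
definition cx_vertex :: "'x set \<Rightarrow> 'x lgraph \<Rightarrow> nat \<Rightarrow> bool" where
  "cx_vertex X W y \<longleftrightarrow>
     (labs X W y = {} \<and> card (nbrs W y) = 3) \<or> (card (labs X W y) = 1 \<and> card (nbrs W y) \<le> 1)"

lemma iso_map_cx_vertex:
  assumes "iso_map X f G H" "wf_graph X G" "wf_graph X H" "y \<in> verts G"
  shows "cx_vertex X H (f y) \<longleftrightarrow> cx_vertex X G y"
  unfolding cx_vertex_def
  using iso_map_labs[OF assms(1,2,4)] assms
    iso_map_card_nbrs[OF assms(1) wf_graph_imp_simple_graph wf_graph_imp_simple_graph] by simp

context
  fixes X :: "'x set" and C :: "'x lgraph" and u v :: nat
  assumes C: "in_CX X C" and uv: "{u, v} \<in> edges C"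
begin

lemma cx_vertex_contract_other:
  assumes y: "y \<in> verts C" "y \<notin> {u, v}"
  shows "cx_vertex X (contract C u v) y"
proof -
  have sC: "simple_graph C" using in_CX_simple_graph[OF C] .
  have "\<not> (u \<in> nbrs C y \<and> v \<in> nbrs C y)"
    using acyclic_no_triangle[OF in_CX_acyclic[OF C] sC, of y u v] uv by auto
  then have "inj_on (contract_map u v) (nbrs C y)"
    unfolding inj_on_def contract_map_def by auto
  then have "card (nbrs (contract C u v) y) = card (nbrs C y)"
    using nbrs_contract_other[OF sC uv y(2)] by (simp add: card_image)
  moreover have "labs X (contract C u v) y = labs X C y"
    using labs_contract_other[OF y(2)] .
  ultimately show ?thesis
    using in_CX_labs[OF C, of y] in_CX_card_nbrs[OF C y(1)] unfolding cx_vertex_def by auto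
qed

lemma contract_merged_size:
  "2 * card (labs X (contract C u v) u) + card (nbrs (contract C u v) u) = 4"
proof -
  have sC: "simple_graph C" using in_CX_simple_graph[OF C] .
  have vu: "{v, u} \<in> edges C" using uv by (simp add: insert_commute)
  have "u \<noteq> v" using simple_graph_edgeD[OF sC uv] by simp
  then have "labs X C u \<inter> labs X C v = {}" by auto
  moreover note ends = leaf_or_fork_card[OF in_CX_edge_end[OF C uv]]
    leaf_or_fork_card[OF in_CX_edge_end[OF C vu]]
  ultimately show ?thesis
    unfolding labs_contract_merged nbrs_contract_merged[OF sC uv]
    using nbrs_edge_ends_disjoint[OF sC in_CX_acyclic[OF C] uv]
    by (simp add: card_Un_disjoint)
qed

lemma not_cx_vertex_contract_merged: "\<not> cx_vertex X (contract C u v) u"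
  using contract_merged_size unfolding cx_vertex_def by auto

lemma is_X_forest_contract: "is_X_forest X (contract C u v)"
proof -
  let ?W = "contract C u v"
  have sC: "simple_graph C" using in_CX_simple_graph[OF C] .
  have sW: "simple_graph ?W" using simple_graph_contract[OF sC uv] .
  have "\<exists>x\<in>X. connected_in ?W y (lab ?W x)" if y: "y \<in> verts ?W" for y
  proof -
    have "y \<in> verts C" using y by simp
    then obtain x where x: "x \<in> X" "connected_in C y (lab C x)"
      using C unfolding in_CX_def is_X_tree_def is_X_forest_def by blast
    then have "(adj ?W)\<^sup>*\<^sup>* (contract_map u v y) (contract_map u v (lab C x))"
      using contract_connected unfolding connected_in_def by blast
    then show ?thesis using x(1) y unfolding connected_in_def lab_contract by auto
  qed
  moreover have "deg ?W y \<ge> 3" if y: "y \<in> verts ?W" "\<not> labeled X ?W y" for y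
  proof (cases "y = u")
    case True
    then show ?thesis
      using y(2) contract_merged_size deg_eq_card_nbrs[OF sW] by (simp add: labeled_iff_labs)
  next
    case False
    then have "cx_vertex X ?W y" using y(1) cx_vertex_contract_other by simp
    then show ?thesis
      using y(2) deg_eq_card_nbrs[OF sW] by (auto simp: cx_vertex_def labeled_iff_labs)
  qed
  ultimately show ?thesis
    using wf_graph_contract[OF in_CX_wf_graph[OF C] uv] contract_acyclic[OF sC uv in_CX_acyclic[OF C]]
    unfolding is_X_forest_def by blast
qed

end

lemma two_sets_exchange:
  assumes "card P = 2" "card Q = 2" "card A = 2" "card B = 2"
    and "P \<inter> Q = {}" "A \<inter> B = {}" "P \<union> Q = A \<union> B"
  shows "P = A \<and> Q = B \<or> P = B \<and> Q = A \<or>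
    (\<exists>b\<in>A. \<exists>c\<in>B. P = (A - {b}) \<union> {c} \<and> Q = (B - {c}) \<union> {b})"
proof -
  have "finite P" "finite A" "finite B" using assms(1,3,4) by (auto intro: card_ge_0_finite)
  have Q: "Q = (A \<union> B) - P" using assms(5,7) by blast
  consider "P \<inter> A = {}" | "A \<subseteq> P" | "P \<inter> A \<noteq> {}" "\<not> A \<subseteq> P" by blast
  then show ?thesis
  proof cases
    case 1
    then have "P \<subseteq> B" using assms(7) by blast
    then have "P = B" using \<open>finite B\<close> assms(1,4) by (simp add: card_subset_eq)
    then show ?thesis using Q assms(6) by blast
  next
    case 2
    then have "P = A" by (metis card_subset_eq \<open>finite P\<close> assms(1,3))
    then show ?thesis using Q assms(6) by blast
  next
    case 3
    then obtain a b where a: "a \<in> P" "a \<in> A" and b: "b \<in> A" "b \<notin> P" by blast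
    then have "{a, b} \<subseteq> A" "card {a, b} = card A" using assms(3) by (auto simp: card_insert_if)
    then have A: "A = {a, b}" using card_subset_eq[OF \<open>finite A\<close>] by metis
    have "card (P - {a}) = 1" using a(1) assms(1) by simp
    then obtain c where "P - {a} = {c}" by (rule card_1_singletonE)
    then have P: "P = {a, c}" "c \<noteq> a" using a(1) by auto
    then have "c \<in> B" using A b(2) assms(7) by blast
    moreover have "P = (A - {b}) \<union> {c}" "Q = (B - {c}) \<union> {b}"
      using A P Q a b assms(6) by auto
    ultimately show ?thesis using b(1) by blast
  qed
qed

lemma disjoint_union_cancel: "A \<inter> B = {} \<Longrightarrow> C \<inter> D = {} \<Longrightarrow> A \<union> B = C \<union> D \<Longrightarrow> A = C \<Longrightarrow> B = D"
  by blast

lemma leaf_or_fork_match: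
  assumes ends: "leaf_or_fork Lp Np" "leaf_or_fork Lq Nq" "leaf_or_fork Lu Nu" "leaf_or_fork Lv Nv"
    and disj: "Lp \<inter> Lq = {}" "Np \<inter> Nq = {}" "Lu \<inter> Lv = {}" "Nu \<inter> Nv = {}"
    and un: "Lp \<union> Lq = Lu \<union> Lv" "Np \<union> Nq = Nu \<union> Nv"
  shows "Lp = Lu \<and> Np = Nu \<and> Lq = Lv \<and> Nq = Nv \<or> Lp = Lv \<and> Np = Nv \<and> Lq = Lu \<and> Nq = Nu \<or>
    Lp = {} \<and> Lq = {} \<and> Lu = {} \<and> Lv = {} \<and>
    (\<exists>b\<in>Nu. \<exists>c\<in>Nv. Np = (Nu - {b}) \<union> {c} \<and> Nq = (Nv - {c}) \<union> {b})"
proof (cases "Lp \<union> Lq = {}")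
  case True
  then have "card Np = 2" "card Nq = 2" "card Nu = 2" "card Nv = 2"
    using ends un(1) by (auto simp: leaf_or_fork_def)
  from two_sets_exchange[OF this disj(2,4) un(2)] show ?thesis
    using True un(1) disj(2,4) un(2) by blast
next
  case False
  have leaf: "La = Lb \<and> Na = Nb"
    if "leaf_or_fork La Na" "leaf_or_fork Lb Nb" "x \<in> La" "x \<in> Lb" for La Lb :: "'a set"
      and Na Nb :: "'b set" and x
    using that by (auto simp: leaf_or_fork_def)
  from False obtain x where "x \<in> Lp \<union> Lq" "x \<in> Lu \<union> Lv" using un(1) by blast
  then consider "x \<in> Lp" "x \<in> Lu" | "x \<in> Lp" "x \<in> Lv" | "x \<in> Lq" "x \<in> Lu" | "x \<in> Lq" "x \<in> Lv"
    by blast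
  then show ?thesis
  proof cases
    case 1
    then have "Lp = Lu" "Np = Nu" using leaf[OF ends(1,3)] by blast+
    moreover have "Lq = Lv" "Nq = Nv"
      using disjoint_union_cancel disj un calculation by metis+
    ultimately show ?thesis by blast
  next
    case 2
    then have "Lp = Lv" "Np = Nv" using leaf[OF ends(1,4)] by blast+
    moreover have "Lq = Lu" "Nq = Nu"
      using disjoint_union_cancel[of Lp Lq Lv Lu] disjoint_union_cancel[of Np Nq Nv Nu]
        disj un calculation by (simp_all add: Int_commute Un_commute)
    ultimately show ?thesis by blast
  next
    case 3
    then have "Lq = Lu" "Nq = Nu" using leaf[OF ends(2,3)] by blast+
    moreover have "Lp = Lv" "Np = Nv"
      using disjoint_union_cancel[of Lq Lp Lu Lv] disjoint_union_cancel[of Nq Np Nu Nv]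
        disj un calculation by (simp_all add: Int_commute Un_commute)
    ultimately show ?thesis by blast
  next
    case 4
    then have "Lq = Lv" "Nq = Nv" using leaf[OF ends(2,4)] by blast+
    moreover have "Lp = Lu" "Np = Nu"
      using disjoint_union_cancel[of Lq Lp Lv Lu] disjoint_union_cancel[of Nq Np Nv Nu]
        disj un calculation by (simp_all add: Int_commute Un_commute)
    ultimately show ?thesis by blast
  qed
qed

lemma verts_nni_result [simp]: "verts (nni_result C u v b c) = verts C"
  and lab_nni_result [simp]: "lab (nni_result C u v b c) = lab C"
  and edges_nni_result: "edges (nni_result C u v b c) = (edges C - {{u, b}, {v, c}}) \<union> {{u, c}, {v, b}}"
  by (simp_all add: nni_result_def verts_def lab_def edges_def)

lemma labs_nni_result [simp]: "labs X (nni_result C u v b c) y = labs X C y"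
  by (simp add: labs_def)

context
  fixes C :: "'x lgraph" and u v b c :: nat
  assumes C: "simple_graph C" and uv: "{u, v} \<in> edges C"
    and b: "{u, b} \<in> edges C" "b \<noteq> v" and c: "{v, c} \<in> edges C" "c \<noteq> u"
begin

lemma nni_distinct: "u \<noteq> v" "u \<noteq> b" "v \<noteq> c"
  using simple_graph_edgeD[OF C] uv b c by blast+

lemma simple_graph_nni_result: "simple_graph (nni_result C u v b c)"
  using C nni_distinct b(2) c(2) simple_graph_edgeD[OF C b(1)] simple_graph_edgeD[OF C c(1)]
  unfolding simple_graph_def edges_nni_result by auto

lemma edge_nni_result_off:
  "y \<notin> {u, v} \<Longrightarrow> z \<notin> {u, v} \<Longrightarrow> {y, z} \<in> edges (nni_result C u v b c) \<longleftrightarrow> {y, z} \<in> edges C"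
  unfolding edges_nni_result by (auto simp: doubleton_eq_iff)

lemma edge_nni_result_centre: "{u, v} \<in> edges (nni_result C u v b c)"
  using uv nni_distinct b(2) c(2) unfolding edges_nni_result by (auto simp: doubleton_eq_iff)

lemma nbrs_nni_result:
  "nbrs (nni_result C u v b c) u - {v} = (nbrs C u - {v} - {b}) \<union> {c}"
  "nbrs (nni_result C u v b c) v - {u} = (nbrs C v - {u} - {c}) \<union> {b}"
  using nni_distinct b(2) c(2) unfolding nbrs_def edges_nni_result by (auto simp: doubleton_eq_iff)

lemma contract_nni_result: "contract (nni_result C u v b c) u v = contract C u v"
proof -
  let ?r = "\<lambda>e. contract_map u v ` e"
  define E0 where "E0 = edges C - {{u, v}} - {{u, b}, {v, c}}"
  have "{u, c} \<noteq> {u, v}" "{v, b} \<noteq> {u, v}" "{u, b} \<noteq> {u, v}" "{v, c} \<noteq> {u, v}"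
    using nni_distinct b(2) c(2) by (auto simp: doubleton_eq_iff)
  then have "edges (nni_result C u v b c) - {{u, v}} = E0 \<union> {{u, c}, {v, b}}"
    "edges C - {{u, v}} = E0 \<union> {{u, b}, {v, c}}"
    using b(1) c(1) unfolding edges_nni_result E0_def by auto
  moreover have "?r {u, c} = {u, c}" "?r {v, b} = {u, b}" "?r {u, b} = {u, b}" "?r {v, c} = {u, c}"
    using nni_distinct b(2) c(2) by (auto simp: contract_map_def)
  ultimately have "?r ` (edges (nni_result C u v b c) - {{u, v}}) = ?r ` (edges C - {{u, v}})"
    by (simp add: insert_commute)
  then show ?thesis
    unfolding contract_def nni_result_def verts_def edges_def lab_def Let_def contract_map_def by simp
qed

end

lemma iso_map_contract_restrict:
  assumes G: "wf_graph X G" and H: "wf_graph X H"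
    and uv: "{u, v} \<in> edges G" and pq: "{p, q} \<in> edges H"
    and g: "iso_map X g (contract H p q) (contract G u v)" and gp: "g p = u"
  shows "bij_betw g (verts H - {p, q}) (verts G - {u, v})"
    and "\<And>y z. y \<in> verts H - {p, q} \<Longrightarrow> z \<in> verts H - {p, q} \<Longrightarrow>
      {y, z} \<in> edges H \<longleftrightarrow> {g y, g z} \<in> edges G"
    and "g ` ((nbrs H p - {q}) \<union> (nbrs H q - {p})) = (nbrs G u - {v}) \<union> (nbrs G v - {u})"
    and "labs X H p \<union> labs X H q = labs X G u \<union> labs X G v"
    and "\<And>x. x \<in> X \<Longrightarrow> lab H x \<notin> {p, q} \<Longrightarrow> lab G x = g (lab H x)"
proof -
  have sG: "simple_graph G" and sH: "simple_graph H"
    using G H by (simp_all add: wf_graph_imp_simple_graph)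
  have "u \<noteq> v" "u \<in> verts G" using simple_graph_edgeD[OF sG uv] by auto
  have "p \<noteq> q" "p \<in> verts H" using simple_graph_edgeD[OF sH pq] by auto
  have bij: "bij_betw g (verts H - {q}) (verts G - {v})"
    and E: "\<And>y z. y \<in> verts H - {q} \<Longrightarrow> z \<in> verts H - {q} \<Longrightarrow>
      {y, z} \<in> edges (contract H p q) \<longleftrightarrow> {g y, g z} \<in> edges (contract G u v)"
    and L: "\<And>x. x \<in> X \<Longrightarrow> g (lab (contract H p q) x) = lab (contract G u v) x"
    using g unfolding iso_map_def by auto
  show bij': "bij_betw g (verts H - {p, q}) (verts G - {u, v})"
    using bij_betw_DiffI[OF bij, of "{p}" "{u}"] gp \<open>p \<noteq> q\<close> \<open>p \<in> verts H\<close> \<open>u \<noteq> v\<close> \<open>u \<in> verts G\<close>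
    by (auto simp: bij_betw_def Diff_insert2[symmetric] insert_commute)
  show "{y, z} \<in> edges H \<longleftrightarrow> {g y, g z} \<in> edges G"
    if "y \<in> verts H - {p, q}" "z \<in> verts H - {p, q}" for y z
  proof -
    have "g y \<in> verts G - {u, v}" "g z \<in> verts G - {u, v}" using bij' that by (meson bij_betwE)+
    then show ?thesis
      using that E[of y z] contract_edge_off[OF sH pq, of y z] contract_edge_off[OF sG uv, of "g y" "g z"]
      by auto
  qed
  have "p \<in> verts (contract H p q)" using \<open>p \<noteq> q\<close> \<open>p \<in> verts H\<close> by simp
  from iso_map_nbrs[OF g simple_graph_contract[OF sH pq] simple_graph_contract[OF sG uv] this]
    iso_map_labs[OF g wf_graph_contract[OF H pq] this]
  show "g ` ((nbrs H p - {q}) \<union> (nbrs H q - {p})) = (nbrs G u - {v}) \<union> (nbrs G v - {u})"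
    and labs: "labs X H p \<union> labs X H q = labs X G u \<union> labs X G v"
    unfolding gp nbrs_contract_merged[OF sH pq] nbrs_contract_merged[OF sG uv]
      labs_contract_merged by simp_all
  show "lab G x = g (lab H x)" if x: "x \<in> X" "lab H x \<notin> {p, q}" for x
  proof -
    have "lab G x \<notin> {u, v}" using labs x by (auto simp: labs_def)
    then show ?thesis using L[OF x(1)] x(2) by (simp add: lab_contract)
  qed
qed

lemma iso_map_contract_merged_vertex:
  assumes G: "in_CX X G" and H: "in_CX X H"
    and uv: "{u, v} \<in> edges G" and pq: "{p, q} \<in> edges H"
    and g: "iso_map X g (contract H p q) (contract G u v)"
  shows "g p = u"
proof (rule ccontr)
  have "p \<noteq> q" "p \<in> verts H" using simple_graph_edgeD[OF in_CX_simple_graph[OF H] pq] by auto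
  assume "g p \<noteq> u"
  moreover have "g p \<in> verts (contract G u v)"
    using g \<open>p \<noteq> q\<close> \<open>p \<in> verts H\<close> unfolding iso_map_def by (auto dest: bij_betwE)
  ultimately have "cx_vertex X (contract G u v) (g p)"
    using cx_vertex_contract_other[OF G uv] by simp
  then have "cx_vertex X (contract H p q) p"
    using iso_map_cx_vertex[OF g wf_graph_contract[OF in_CX_wf_graph[OF H] pq]
        wf_graph_contract[OF in_CX_wf_graph[OF G] uv]] \<open>p \<noteq> q\<close> \<open>p \<in> verts H\<close> by simp
  then show False using not_cx_vertex_contract_merged[OF H pq] by contradiction
qed

lemma iso_map_contract_ends_cases:
  assumes G: "in_CX X G" and H: "in_CX X H"
    and uv: "{u, v} \<in> edges G" and pq: "{p, q} \<in> edges H"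
    and g: "iso_map X g (contract H p q) (contract G u v)" and gp: "g p = u"
  obtains (same) "labs X H p = labs X G u" "g ` (nbrs H p - {q}) = nbrs G u - {v}"
      "labs X H q = labs X G v" "g ` (nbrs H q - {p}) = nbrs G v - {u}"
    | (swapped) "labs X H p = labs X G v" "g ` (nbrs H p - {q}) = nbrs G v - {u}"
      "labs X H q = labs X G u" "g ` (nbrs H q - {p}) = nbrs G u - {v}"
    | (exchange) b c where "labs X G u = {}" "labs X G v = {}" "labs X H p = {}" "labs X H q = {}"
      "b \<in> nbrs G u - {v}" "c \<in> nbrs G v - {u}"
      "g ` (nbrs H p - {q}) = (nbrs G u - {v} - {b}) \<union> {c}"
      "g ` (nbrs H q - {p}) = (nbrs G v - {u} - {c}) \<union> {b}"
proof -
  have sG: "simple_graph G" and sH: "simple_graph H"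
    using G H by (simp_all add: in_CX_simple_graph)
  note restrict = iso_map_contract_restrict[OF in_CX_wf_graph[OF G] in_CX_wf_graph[OF H] uv pq g gp]
  let ?D = "verts H - {p, q}"
  let ?A = "nbrs H p - {q}" and ?B = "nbrs H q - {p}"
  have "p \<noteq> q" "u \<noteq> v" using simple_graph_edgeD[OF sH pq] simple_graph_edgeD[OF sG uv] by auto
  have inj: "inj_on g ?D" using restrict(1) by (simp add: bij_betw_def)
  have AB: "?A \<subseteq> ?D" "?B \<subseteq> ?D" using nbrs_subset[OF sH, of p] nbrs_subset[OF sH, of q] by auto
  have qp: "{q, p} \<in> edges H" and vu: "{v, u} \<in> edges G" using pq uv by (simp_all add: insert_commute)
  have "g ` ?A \<inter> g ` ?B = {}"
    using nbrs_edge_ends_disjoint[OF sH in_CX_acyclic[OF H] pq] AB inj unfolding inj_on_def by blast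
  moreover have "g ` ?A \<union> g ` ?B = (nbrs G u - {v}) \<union> (nbrs G v - {u})"
    using restrict(3) by (simp add: image_Un)
  moreover have "labs X H p \<inter> labs X H q = {}" "labs X G u \<inter> labs X G v = {}"
    using \<open>p \<noteq> q\<close> \<open>u \<noteq> v\<close> by auto
  moreover have "leaf_or_fork (labs X H p) (g ` ?A)" "leaf_or_fork (labs X H q) (g ` ?B)"
    using in_CX_edge_end[OF H pq] in_CX_edge_end[OF H qp] AB
    by (auto intro: leaf_or_fork_image inj_on_subset[OF inj])
  ultimately show thesis
    using leaf_or_fork_match[OF _ _ in_CX_edge_end[OF G uv] in_CX_edge_end[OF G vu] _ _ _
        nbrs_edge_ends_disjoint[OF sG in_CX_acyclic[OF G] uv] restrict(4)] same swapped exchange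
    by metis
qed

lemma nni_over_if_iso_contractions:
  assumes G: "in_CX X G" and H: "in_CX X H"
    and uv: "{u, v} \<in> edges G" and pq: "{p, q} \<in> edges H"
    and iso: "iso X (contract G u v) (contract H p q)" and not_iso: "\<not> iso X G H"
  shows "nni_over X G u v H"
proof -
  have wG: "wf_graph X G" and wH: "wf_graph X H" and sG: "simple_graph G" and sH: "simple_graph H"
    using G H by (simp_all add: in_CX_wf_graph in_CX_simple_graph)
  obtain g where g: "iso_map X g (contract H p q) (contract G u v)"
    using iso_sym[OF iso wf_graph_contract[OF wG uv]] unfolding iso_iff_iso_map by blast
  have gp: "g p = u" using iso_map_contract_merged_vertex[OF G H uv pq g] .
  note restrict = iso_map_contract_restrict[OF wG wH uv pq g gp]
  have vu: "{v, u} \<in> edges G" using uv by (simp add: insert_commute)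
  show ?thesis
  proof (cases rule: iso_map_contract_ends_cases[OF G H uv pq g gp, case_names same swapped exchange])
    case same
    then have "iso X H G"
      using iso_extend_across_edge[OF sH sG pq uv restrict(1,2)] restrict(5) by simp
    then show ?thesis using iso_sym[OF _ wH] not_iso by blast
  next
    case swapped
    then have "iso X H G"
      using iso_extend_across_edge[OF sH sG pq vu _ restrict(2)] restrict(1,5)
      by (simp add: insert_commute)
    then show ?thesis using iso_sym[OF _ wH] not_iso by blast
  next
    case (exchange b c)
    then have b: "{u, b} \<in> edges G" "b \<noteq> v" and c: "{v, c} \<in> edges G" "c \<noteq> u" by auto
    have "iso X H (nni_result G u v b c)"
      using iso_extend_across_edge[OF sH simple_graph_nni_result[OF sG uv b c] pq
          edge_nni_result_centre[OF sG uv b c]] exchange restrict(1,2,5)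
        edge_nni_result_off[OF sG uv b c] nbrs_nni_result[OF sG uv b c]
        bij_betwE[OF restrict(1)]
      by simp
    moreover have "internal_vertex X G u" "internal_vertex X G v"
      using exchange simple_graph_edgeD[OF sG uv] by (auto simp: internal_vertex_def labeled_iff_labs)
    ultimately show ?thesis unfolding nni_over_def using uv b c by blast
  qed
qed

lemma verts_delete [simp]: "verts (delete G a b) = verts G"
  and edges_delete [simp]: "edges (delete G a b) = edges G - {{a, b}}"
  and lab_delete [simp]: "lab (delete G a b) = lab G"
  by (simp_all add: delete_def verts_def edges_def lab_def)

lemma in_CX_single_edge:
  assumes C: "in_CX X C" and ab: "{a, b} \<in> edges C"
    and "nbrs C a \<subseteq> {b}" "nbrs C b \<subseteq> {a}"
  shows "verts C = {a, b}" "edges C = {{a, b}}"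
proof -
  have sC: "simple_graph C" using in_CX_simple_graph[OF C] .
  have "a \<in> verts C" "b \<in> verts C" using simple_graph_edgeD[OF sC ab] by auto
  have "y \<in> {a, b}" if "(adj C)\<^sup>*\<^sup>* y a" for y
    using that
  proof (induction rule: converse_rtranclp_induct)
    case (step y y')
    then have "y \<in> nbrs C y'" by (simp add: adj_def insert_commute)
    with step.IH assms(3,4) show ?case by auto
  qed simp
  moreover have "connected_in C y a" if "y \<in> verts C" for y
    using C that \<open>a \<in> verts C\<close> unfolding in_CX_def is_X_tree_def by blast
  ultimately show V: "verts C = {a, b}"
    using \<open>a \<in> verts C\<close> \<open>b \<in> verts C\<close> unfolding connected_in_def by blast
  show "edges C = {{a, b}}"
  proof (intro equalityI subsetI)
    fix e assume e: "e \<in> edges C"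
    then obtain x y where "e = {x, y}" "x \<noteq> y" using simple_graph_edgeE[OF sC] by metis
    with e show "e \<in> {{a, b}}" using simple_graph_edgeD[OF sC, of x y] V by auto
  qed (use ab in simp)
qed

lemma in_CX_safe_deletion:
  assumes C: "in_CX X C" and ab: "{a, b} \<in> edges C" and safe: "safe_deletion X C a b"
  shows "verts C = {a, b}" "edges C = {{a, b}}"
proof -
  have sC: "simple_graph C" using in_CX_simple_graph[OF C] .
  have ba: "{b, a} \<in> edges C" using ab by (simp add: insert_commute)
  have leaf: "nbrs C y \<subseteq> {z}" if yz: "{y, z} \<in> edges C" and "labeled X C y \<or> deg C y > 3" for y z
  proof -
    have "y \<in> verts C" using simple_graph_edgeD[OF sC yz] by simp
    have "labs X C y \<noteq> {}"
    proof
      assume "labs X C y = {}"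
      then have "deg C y = 3"
        using in_CX_card_nbrs(2)[OF C \<open>y \<in> verts C\<close>] deg_eq_card_nbrs[OF sC] by simp
      with that(2) \<open>labs X C y = {}\<close> show False by (simp add: labeled_iff_labs)
    qed
    then show ?thesis using in_CX_edge_end[OF C yz] by (auto simp: leaf_or_fork_def)
  qed
  show "verts C = {a, b}" "edges C = {{a, b}}"
    using in_CX_single_edge[OF C ab leaf[OF ab] leaf[OF ba]] safe
    unfolding safe_deletion_def by auto
qed

lemma in_CX_contract_not_iso_delete:
  assumes A: "in_CX X A" and uv: "{u, v} \<in> edges A" and safe: "safe_deletion X A u v"
    and B: "in_CX X B" and pq: "{p, q} \<in> edges B"
  shows "\<not> iso X (contract B p q) (delete A u v)"
proof
  assume iso: "iso X (contract B p q) (delete A u v)"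
  have "u \<noteq> v" using simple_graph_edgeD[OF in_CX_simple_graph[OF A] uv] by simp
  have "p \<noteq> q" using simple_graph_edgeD[OF in_CX_simple_graph[OF B] pq] by simp
  note A1 = in_CX_safe_deletion[OF A uv safe]
  have "edges (contract B p q) = {}"
    using iso_edgeless[OF iso] A1 simple_graph_contract[OF in_CX_simple_graph[OF B] pq] by simp
  then have "nbrs B p \<subseteq> {q}" "nbrs B q \<subseteq> {p}"
    using nbrs_contract_merged[OF in_CX_simple_graph[OF B] pq] unfolding nbrs_def by auto
  then have "verts B = {p, q}" by (rule in_CX_single_edge(1)[OF B pq])
  then show False using iso_card_verts[OF iso] A1 \<open>u \<noteq> v\<close> \<open>p \<noteq> q\<close> by simp
qed

lemma in_CX_iso_deletions:
  assumes A: "in_CX X A" and uv: "{u, v} \<in> edges A" and "safe_deletion X A u v"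
    and B: "in_CX X B" and pq: "{p, q} \<in> edges B" and "safe_deletion X B p q"
    and iso: "iso X (delete A u v) (delete B p q)"
  shows "iso X A B"
proof -
  note A1 = in_CX_safe_deletion[OF A uv assms(3)] and B1 = in_CX_safe_deletion[OF B pq assms(6)]
  have "u \<noteq> v" using simple_graph_edgeD[OF in_CX_simple_graph[OF A] uv] by simp
  have "p \<noteq> q" using simple_graph_edgeD[OF in_CX_simple_graph[OF B] pq] by simp
  obtain f where f: "bij_betw f (verts A) (verts B)" "\<forall>x \<in> X. f (lab A x) = lab B x"
    using iso unfolding iso_iff_iso_map iso_map_def by auto
  have "{x, y} \<in> edges A \<longleftrightarrow> {f x, f y} \<in> edges B" if "x \<in> verts A" "y \<in> verts A" for x y
  proof -
    have "f x \<in> verts B" "f y \<in> verts B" using f(1) that by (meson bij_betwE)+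
    moreover have "x = y \<longleftrightarrow> f x = f y" using f(1) that unfolding bij_betw_def inj_on_def by blast
    ultimately show ?thesis
      using that A1 B1 \<open>u \<noteq> v\<close> \<open>p \<noteq> q\<close> by (auto simp: doubleton_eq_iff)
  qed
  then show ?thesis using f unfolding iso_iff_iso_map iso_map_def by blast
qed

lemma common_lower_cover_imp_iso_contractions:
  assumes Ci: "in_CX X Ci" and Cj: "in_CX X Cj" and not_iso: "\<not> iso X Ci Cj"
    and w: "is_X_forest X w" "covered_by X w Ci" "covered_by X w Cj"
  obtains u v p q where "{u, v} \<in> edges Ci" "{p, q} \<in> edges Cj"
    "iso X (contract Ci u v) (contract Cj p q)"
proof -
  have ww: "wf_graph X w" using w(1) unfolding is_X_forest_def by blast
  obtain u v where uv: "{u, v} \<in> edges Ci"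
    and ci: "iso X w (contract Ci u v) \<or> safe_deletion X Ci u v \<and> iso X w (delete Ci u v)"
    using w(2) unfolding covered_by_def by blast
  obtain p q where pq: "{p, q} \<in> edges Cj"
    and cj: "iso X w (contract Cj p q) \<or> safe_deletion X Cj p q \<and> iso X w (delete Cj p q)"
    using w(3) unfolding covered_by_def by blast
  have via_w: "iso X A B" if "iso X w A" "iso X w B" for A B
    using iso_trans[OF iso_sym[OF that(1) ww] that(2)] .
  from ci cj show thesis
  proof (elim disjE conjE)
    assume "iso X w (contract Ci u v)" "iso X w (contract Cj p q)"
    then show thesis by (rule that[OF uv pq via_w])
  next
    assume "iso X w (contract Ci u v)" "safe_deletion X Cj p q" "iso X w (delete Cj p q)"
    then show thesis using in_CX_contract_not_iso_delete[OF Cj pq _ Ci uv] via_w by blast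
  next
    assume "safe_deletion X Ci u v" "iso X w (delete Ci u v)" "iso X w (contract Cj p q)"
    then show thesis using in_CX_contract_not_iso_delete[OF Ci uv _ Cj pq] via_w by blast
  next
    assume "safe_deletion X Ci u v" "iso X w (delete Ci u v)"
      "safe_deletion X Cj p q" "iso X w (delete Cj p q)"
    then show thesis using in_CX_iso_deletions[OF Ci uv _ Cj pq] via_w not_iso by blast
  qed
qed

lemma nni_over_imp_common_lower_cover:
  assumes Ci: "in_CX X Ci" and Cj: "in_CX X Cj" and nni: "nni_over X Ci u v Cj"
  shows "\<exists>w. is_X_forest X w \<and> covered_by X w Ci \<and> covered_by X w Cj"
proof -
  obtain b c where uv: "{u, v} \<in> edges Ci" and b: "{u, b} \<in> edges Ci" "b \<noteq> v"
    and c: "{v, c} \<in> edges Ci" "c \<noteq> u" and iso: "iso X Cj (nni_result Ci u v b c)"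
    using nni unfolding nni_over_def by blast
  have sCi: "simple_graph Ci" using in_CX_simple_graph[OF Ci] .
  let ?N = "nni_result Ci u v b c"
  have wN: "wf_graph X ?N"
    using simple_graph_nni_result[OF sCi uv b c] in_CX_wf_graph[OF Ci]
    unfolding wf_graph_def simple_graph_def by simp
  obtain f where f: "iso_map X f ?N Cj"
    using iso_sym[OF iso in_CX_wf_graph[OF Cj]] unfolding iso_iff_iso_map by blast
  have "{f u, f v} \<in> edges Cj"
    using f edge_nni_result_centre[OF sCi uv b c] simple_graph_edgeD[OF sCi uv]
    unfolding iso_map_def by auto
  moreover have "iso X (contract Ci u v) (contract Cj (f u) (f v))"
    using iso_map_contract[OF f wN in_CX_wf_graph[OF Cj] edge_nni_result_centre[OF sCi uv b c]]
    unfolding contract_nni_result[OF sCi uv b c] .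
  ultimately have "covered_by X (contract Ci u v) Cj" unfolding covered_by_def by blast
  moreover have "covered_by X (contract Ci u v) Ci" using uv iso_refl unfolding covered_by_def by blast
  ultimately show ?thesis using is_X_forest_contract[OF Ci uv] by blast
qed

theorem mainTheorem5:
  fixes X :: "'x set" and Ci Cj :: "'x lgraph"
  assumes "finite X"
    and "in_CX X Ci" and "in_CX X Cj"
    and "\<not> iso X Ci Cj"
  shows "(\<exists>w. is_X_forest X w \<and> covered_by X w Ci \<and> covered_by X w Cj) \<longleftrightarrow>
         (\<exists>u v. nni_over X Ci u v Cj)"
proof
  assume "\<exists>w. is_X_forest X w \<and> covered_by X w Ci \<and> covered_by X w Cj"
  then obtain w where "is_X_forest X w" "covered_by X w Ci" "covered_by X w Cj" by blast
  then obtain u v p q where "{u, v} \<in> edges Ci" "{p, q} \<in> edges Cj"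
      "iso X (contract Ci u v) (contract Cj p q)"
    using common_lower_cover_imp_iso_contractions[OF assms(2-4)] by blast
  then show "\<exists>u v. nni_over X Ci u v Cj"
    using nni_over_if_iso_contractions[OF assms(2,3)] assms(4) by blast
next
  assume "\<exists>u v. nni_over X Ci u v Cj"
  then show "\<exists>w. is_X_forest X w \<and> covered_by X w Ci \<and> covered_by X w Cj"
    using nni_over_imp_common_lower_cover[OF assms(2,3)] by blast
qed

end
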